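(* Let $P$ be a propositional normal logic program with countably many rules, and let $Z$ be its set of propositional atoms. Then, for every countable ordinal $\alpha<\Omega$, the immediate consequence operator $T_P:V^Z\to V^Z$ is $\alpha$-continuous with respect to the relations $\sqsubseteq_\alpha$ on $V^Z$.
   Context: Truth values. Let $\Omega$ be the first uncountable ordinal. $V$ consists of values $F_\alpha,T_\alpha$ ($\alpha<\Omega$) and $0$, totally ordered by $$F_0<F_1<\dots<F_\alpha<\dots<0<\dots<T_\alpha<\dots<T_1<T_0.$$ This is a complete lattice with supremum $\bigvee$. Order of a value: $order(F_\alpha)=order(T_\alpha)=\alpha$ and $order(0)=+\infty$. Relations on $V$, for $\alpha<\Omega$: $x\sqsubseteq_\alpha y$ iff either $x=y$, or both $order(x)\ge\alpha$ and $order(y)\ge\alpha$ and at least one of the following holds: both orders are $>\alpha$; $x=F_\alpha$; $y=T_\alpha$. Write $=_\alpha$ for the induced equivalence. The operation $\bigsqcup_\alpha$ on $V$, for $X\subseteq(x]_\alpha$ where $(x]_\alpha=\{y:\forall\beta<\alpha,\ x=_\beta y\}$: - if $order(x)<\alpha$, then $\bigsqcup_\alpha X=x$; - otherwise $\bigsqcup_\alpha X$ is $T_\alpha$ if $T_\alpha\in X$, is $F_\alpha$ if $X\subseteq\{F_\alpha\}$, and is $F_{\alpha+1}$ otherwise. Interpretations. $V^Z$ is the set of interpretations. On $V^Z$: $I\le J$ iff $I(z)\le J(z)$ for all $z$; $I\sqsubseteq_\alpha J$ iff $I(z)\sqsubseteq_\alpha J(z)$ for all $z\in Z$; $\bigsqcup_\alpha$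 and $\bigvee$ are computed pointwise. Programs. A rule has the form $p\leftarrow l_1,\dots,l_n$, where $p\in Z$ and each $l_i$ is either an atom $q$ or a negated atom $\sim q$ with $q\in Z$; alternatively the body is the constant true or false. An interpretation $I$ extends to bodies as follows: - $I(\sim q)=\sim(I(q))$, where $\sim F_\beta=T_{\beta+1}$, $\sim T_\beta=F_{\beta+1}$ and $\sim0=0$; - $I(l_1,\dots,l_n)=\min\{I(l_1),\dots,I(l_n)\}$; - $I(\mathrm{true})=T_0$ and $I(\mathrm{false})=F_0$. $T_P(I)(p)=\bigvee\{I(l_1,\dots,l_n):(p\leftarrow l_1,\dots,l_n)\in P\}$. $\alpha$-continuity. A function $f:V^Z\to V^Z$ is $\alpha$-monotonic if $I\sqsubseteq_\alpha J$ implies $f(I)\sqsubseteq_\alpha f(J)$. It is $\alpha$-continuous if it is $\alpha$-monotonic and, for every sequence $(I_n)_{n\ge0}$ with $I_n\sqsubseteq_\alpha I_{n+1}$, we have $f(\bigsqcup_\alpha\{I_n:n\ge0\})=_\alpha\bigsqcup_\alpha\{f(I_n):n\ge0\}$. *)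

theory Defs
  imports "HOL-Library.Countable_Set"
begin

text \<open>Countable ordinals (the ordinals below Omega) are modelled by a type variable
  'o :: wellorder, subject to the hypotheses of the theorem that 'o is uncountable
  and every proper initial segment is countable (this characterises omega_1).\<close>

datatype 'o tv = F 'o | Zero | T 'o

fun vle :: "'o::wellorder tv \<Rightarrow> 'o tv \<Rightarrow> bool" where
  "vle (F a) (F b) = (a \<le> b)"
| "vle (F a) Zero = True"
| "vle (F a) (T b) = True"
| "vle Zero (F b) = False"
| "vle Zero Zero = True"
| "vle Zero (T b) = True"
| "vle (T a) (F b) = False"
| "vle (T a) Zero = False"
| "vle (T a) (T b) = (b \<le> a)"

definition vSup :: "'o::wellorder tv set \<Rightarrow> 'o tv" where
  "vSup S = (THE x. (\<forall>y\<in>S. vle y x) \<and> (\<forall>z. (\<forall>y\<in>S. vle y z) \<longrightarrow> vle x z))"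

definition vmin :: "'o::wellorder tv \<Rightarrow> 'o tv \<Rightarrow> 'o tv" where
  "vmin x y = (if vle x y then x else y)"

text \<open>order(x) >= alpha and order(x) > alpha (order(0) = +infinity).\<close>
fun ord_ge :: "'o::wellorder tv \<Rightarrow> 'o \<Rightarrow> bool" where
  "ord_ge (F b) a = (a \<le> b)"
| "ord_ge Zero a = True"
| "ord_ge (T b) a = (a \<le> b)"

fun ord_gt :: "'o::wellorder tv \<Rightarrow> 'o \<Rightarrow> bool" where
  "ord_gt (F b) a = (a < b)"
| "ord_gt Zero a = True"
| "ord_gt (T b) a = (a < b)"

definition sqle :: "'o::wellorder \<Rightarrow> 'o tv \<Rightarrow> 'o tv \<Rightarrow> bool" where
  "sqle a x y = (x = y \<or> (ord_ge x a \<and> ord_ge y a \<and>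
       ((ord_gt x a \<and> ord_gt y a) \<or> x = F a \<or> y = T a)))"

definition sqeq :: "'o::wellorder \<Rightarrow> 'o tv \<Rightarrow> 'o tv \<Rightarrow> bool" where
  "sqeq a x y = (sqle a x y \<and> sqle a y x)"

definition ozero :: "'o::wellorder" where
  "ozero = (LEAST b. True)"

definition osuc :: "'o::wellorder \<Rightarrow> 'o" where
  "osuc a = (LEAST b. a < b)"

text \<open>The operation bigsqcup_alpha X, for X contained in (x]_alpha; x is an explicit parameter.\<close>
definition vlub :: "'o::wellorder \<Rightarrow> 'o tv \<Rightarrow> 'o tv set \<Rightarrow> 'o tv" where
  "vlub a x X = (if \<not> ord_ge x a then x
     else if T a \<in> X then T a
     else if X \<subseteq> {F a} then F a
     else F (osuc a))"

definition sqleI :: "'o::wellorder \<Rightarrow> ('z \<Rightarrow> 'o tv) \<Rightarrow> ('z \<Rightarrow> 'o tv) \<Rightarrow> bool" where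
  "sqleI a I J = (\<forall>z. sqle a (I z) (J z))"

definition sqeqI :: "'o::wellorder \<Rightarrow> ('z \<Rightarrow> 'o tv) \<Rightarrow> ('z \<Rightarrow> 'o tv) \<Rightarrow> bool" where
  "sqeqI a I J = (sqleI a I J \<and> sqleI a J I)"

definition vlubI :: "'o::wellorder \<Rightarrow> ('z \<Rightarrow> 'o tv) \<Rightarrow> ('z \<Rightarrow> 'o tv) set \<Rightarrow> ('z \<Rightarrow> 'o tv)" where
  "vlubI a J X = (\<lambda>z. vlub a (J z) ((\<lambda>I. I z) ` X))"

datatype 'z lit = Pos 'z | Neg 'z
datatype 'z body = Lits "'z lit list" | BTrue | BFalse
type_synonym 'z rule = "'z \<times> 'z body"

fun vneg :: "'o::wellorder tv \<Rightarrow> 'o tv" where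
  "vneg (F b) = T (osuc b)"
| "vneg (T b) = F (osuc b)"
| "vneg Zero = Zero"

fun eval_lit :: "('z \<Rightarrow> 'o::wellorder tv) \<Rightarrow> 'z lit \<Rightarrow> 'o tv" where
  "eval_lit I (Pos q) = I q"
| "eval_lit I (Neg q) = vneg (I q)"

fun eval_body :: "('z \<Rightarrow> 'o::wellorder tv) \<Rightarrow> 'z body \<Rightarrow> 'o tv" where
  "eval_body I (Lits ls) = foldr (\<lambda>l acc. vmin (eval_lit I l) acc) ls (T ozero)"
| "eval_body I BTrue = T ozero"
| "eval_body I BFalse = F ozero"

definition TP :: "'z rule set \<Rightarrow> ('z \<Rightarrow> 'o::wellorder tv) \<Rightarrow> ('z \<Rightarrow> 'o tv)" where
  "TP P I = (\<lambda>p. vSup {eval_body I b | b. (p, b) \<in> P})"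

definition alpha_monotonic :: "'o::wellorder \<Rightarrow> (('z \<Rightarrow> 'o tv) \<Rightarrow> ('z \<Rightarrow> 'o tv)) \<Rightarrow> bool" where
  "alpha_monotonic a f = (\<forall>I J. sqleI a I J \<longrightarrow> sqleI a (f I) (f J))"

text \<open>For the chain (I n), the reference point x of bigsqcup_alpha is taken to be I 0
  (resp. f (I 0)), which lies in the same class (x]_alpha as the whole chain.\<close>
definition alpha_continuous :: "'o::wellorder \<Rightarrow> (('z \<Rightarrow> 'o tv) \<Rightarrow> ('z \<Rightarrow> 'o tv)) \<Rightarrow> bool" where
  "alpha_continuous a f = (alpha_monotonic a f \<and>
     (\<forall>Is :: nat \<Rightarrow> ('z \<Rightarrow> 'o tv). (\<forall>n. sqleI a (Is n) (Is (Suc n))) \<longrightarrow>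
        sqeqI a (f (vlubI a (Is 0) (range Is))) (vlubI a (f (Is 0)) (range (\<lambda>n. f (Is n))))))"

end

theory Submission
  imports Defs
begin

text \<open>Every ingredient of \<open>T\<^sub>P\<close> (min, \<open>\<sim>\<close> and suprema) is \<open>\<alpha>\<close>-monotonic; for \<open>\<sim>\<close> this needs
  \<open>\<beta> < \<beta>+1\<close>, i.e. that the ordinals have no largest element, which is all the hypotheses on
  \<open>'o\<close> are used for. Along a \<open>\<sqsubseteq>\<^sub>\<alpha>\<close>-chain of
  interpretations each atom eventually dominates, up to \<open>\<sqsubseteq>\<^sub>\<alpha>\<close>, its value in the limit
  \<open>\<Squnion>\<^sub>\<alpha>\<close>, and a body mentions only finitely many atoms, so every body value eventually
  dominates its value in the limit. Hence the supremum over the rules for \<open>p\<close> reaches \<open>T\<^sub>\<alpha>\<close>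
  in the limit only if it does so along the chain, and it is \<open>F\<^sub>\<alpha>\<close> in the limit if it is \<open>F\<^sub>\<alpha>\<close>
  all along; these are exactly the cases distinguished by \<open>\<Squnion>\<^sub>\<alpha>\<close>.\<close>

lemma vle_refl: "vle x x"
  by (cases x) auto

lemma vle_antisym: "vle x y \<Longrightarrow> vle y x \<Longrightarrow> x = y"
  by (cases x; cases y) auto

lemma vle_trans: "vle x y \<Longrightarrow> vle y z \<Longrightarrow> vle x z"
  by (cases x; cases y; cases z) auto

lemma vle_total: "vle x y \<or> vle y x"
  by (cases x; cases y) auto

lemma ord_ge_iff: "ord_ge x a \<longleftrightarrow> vle (F a) x \<and> vle x (T a)"
  by (cases x) auto

lemma ord_gt_iff: "ord_gt x a \<longleftrightarrow> ord_ge x a \<and> x \<noteq> F a \<and> x \<noteq> T a"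
  by (cases x) auto

lemma not_ord_ge_if_vle_F: "vle y (F c) \<Longrightarrow> c < a \<Longrightarrow> \<not> ord_ge y a"
  by (cases y) auto

lemma less_osuc:
  fixes b :: "'o::wellorder"
  assumes "\<not> countable (UNIV :: 'o set)" and "\<forall>b::'o. countable {c. c < b}"
  shows "b < osuc b"
proof -
  have "\<exists>c. b < c"
  proof (rule ccontr)
    assume "\<not> (\<exists>c. b < c)"
    then have "UNIV \<subseteq> insert b {c. c < b}"
      by (auto simp: not_less_iff_gr_or_eq)
    then show False
      using assms countable_subset by (metis countable_insert)
  qed
  then show ?thesis
    unfolding osuc_def by (rule LeastI_ex)
qed

subsection \<open>Suprema of truth values\<close>

lemma ex_tv_lub: "\<exists>x. (\<forall>y\<in>S. vle y x) \<and> (\<forall>z. (\<forall>y\<in>S. vle y z) \<longrightarrow> vle x z)"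
proof -
  consider (T) "\<exists>b. T b \<in> S" | (Zero) "Zero \<in> S" "\<forall>b. T b \<notin> S"
    | (F) "S \<subseteq> range F" "\<exists>c. \<forall>b. F b \<in> S \<longrightarrow> b \<le> c"
    | (unbounded) "S \<subseteq> range F" "\<forall>c. \<exists>b. F b \<in> S \<and> \<not> b \<le> c"
    by (metis rangeI subsetI tv.exhaust)
  then show ?thesis
  proof cases
    case T
    define b where "b = (LEAST b. T b \<in> S)"
    have "T b \<in> S"
      unfolding b_def using T by (rule LeastI_ex)
    moreover have "\<forall>y\<in>S. vle y (T b)"
      unfolding b_def by (metis Least_le tv.exhaust vle.simps(3,6,9))
    ultimately show ?thesis
      by blast
  next
    case Zero
    then have "\<forall>y\<in>S. vle y Zero"
      by (metis tv.exhaust vle.simps(2,5))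
    with Zero(1) show ?thesis
      by blast
  next
    case F
    define c where "c = (LEAST c. \<forall>b. F b \<in> S \<longrightarrow> b \<le> c)"
    have "\<forall>b. F b \<in> S \<longrightarrow> b \<le> c"
      unfolding c_def using F(2) by (rule LeastI_ex)
    moreover have "vle (F c) z" if "\<forall>y\<in>S. vle y z" for z
      using that unfolding c_def by (cases z) (auto intro!: Least_le)
    ultimately show ?thesis
      using F(1) by (intro exI[of _ "F c"]) auto
  next
    case unbounded
    have "vle Zero z" if "\<forall>y\<in>S. vle y z" for z
      using that unbounded by (cases z) (auto, meson vle.simps(1))
    moreover have "\<forall>y\<in>S. vle y Zero"
      using unbounded(1) by auto
    ultimately show ?thesis
      by blast
  qed
qed

lemma vSup_is_lub:
  "(\<forall>y\<in>S. vle y (vSup S)) \<and> (\<forall>z. (\<forall>y\<in>S. vle y z) \<longrightarrow> vle (vSup S) z)"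
  unfolding vSup_def
  by (rule theI') (use ex_tv_lub[of S] in \<open>blast intro: vle_antisym\<close>)

lemma vSup_upper: "y \<in> S \<Longrightarrow> vle y (vSup S)"
  using vSup_is_lub by blast

lemma vSup_least: "(\<And>y. y \<in> S \<Longrightarrow> vle y z) \<Longrightarrow> vle (vSup S) z"
  using vSup_is_lub by blast

lemma vSup_T_mem:
  assumes "vSup S = T c"
  shows "T c \<in> S"
proof (cases "\<exists>b. T b \<in> S")
  case True
  define b where "b = (LEAST b. T b \<in> S)"
  have "T b \<in> S"
    unfolding b_def using True by (rule LeastI_ex)
  moreover have "vle (T c) (T b)"
    using assms by (metis vSup_least Least_le b_def tv.exhaust vle.simps(3,6,9))
  ultimately show ?thesis
    using assms vSup_upper vle_antisym by metis
next
  case False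
  then have "vle (T c) Zero"
    using assms by (metis vSup_least tv.exhaust vle.simps(2,5))
  then show ?thesis
    by simp
qed

subsection \<open>The relations \<open>\<sqsubseteq>\<^sub>\<alpha>\<close> on truth values\<close>

lemma sqle_refl: "sqle a x x"
  by (simp add: sqle_def)

lemma sqle_trans: "sqle a x y \<Longrightarrow> sqle a y z \<Longrightarrow> sqle a x z"
  unfolding sqle_def ord_gt_iff by auto

lemma sqle_T_left: "sqle a (T a) y \<Longrightarrow> y = T a"
  by (cases y) (auto simp: sqle_def)

lemma sqle_F_right: "sqle a x (F a) \<Longrightarrow> x = F a"
  by (cases x) (auto simp: sqle_def)

lemma sqle_not_ord_ge_left: "sqle a x y \<Longrightarrow> \<not> ord_ge x a \<Longrightarrow> y = x"
  by (auto simp: sqle_def)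

lemma sqle_not_ord_ge_right: "sqle a x y \<Longrightarrow> \<not> ord_ge y a \<Longrightarrow> x = y"
  by (auto simp: sqle_def)

lemma sqle_ord_ge_left: "sqle a x y \<Longrightarrow> ord_ge x a \<Longrightarrow> ord_ge y a"
  by (auto simp: sqle_def)

lemma sqle_eq_or_ord_ge: "sqle a x y \<Longrightarrow> x = y \<or> ord_ge x a \<and> ord_ge y a"
  by (auto simp: sqle_def)

lemma sqle_ord_ge_iff:
  "ord_ge x a \<Longrightarrow> ord_ge y a \<Longrightarrow> sqle a x y \<longleftrightarrow> (x = T a \<longrightarrow> y = T a) \<and> (y = F a \<longrightarrow> x = F a)"
  unfolding sqle_def ord_gt_iff by auto

lemma vmin_comm: "vmin x y = vmin y x"
  unfolding vmin_def using vle_antisym vle_total by metis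

lemma sqle_vmin:
  assumes "sqle a x x'" and "sqle a y y'"
  shows "sqle a (vmin x y) (vmin x' y')"
proof -
  have left: "sqle a (vmin x y) (vmin x' y)" if "sqle a x x'" for x x' y
    using that by (cases x; cases x'; cases y) (auto simp: sqle_def vmin_def)
  show ?thesis
    using left[OF assms(1)] left[OF assms(2)] vmin_comm sqle_trans by metis
qed

lemma sqle_vneg:
  assumes "\<And>b::'o::wellorder. b < osuc b" and "sqle (a::'o) x y"
  shows "sqle a (vneg x) (vneg y)"
proof (cases "x = y")
  case False
  have "ord_gt (vneg z) a" if "ord_ge z a" for z
    using that assms(1) by (cases z) (auto intro: order.strict_trans1)
  moreover have "ord_ge x a" "ord_ge y a"
    using False assms(2) sqle_eq_or_ord_ge by blast+
  ultimately show ?thesis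
    by (simp add: sqle_def ord_gt_iff)
qed (simp add: sqle_refl)

lemma vSup_le_if_sqle:
  assumes "\<forall>r\<in>R. sqle a (f r) (g r)" and "vle (vSup (f ` R)) u" and "vle (T a) u"
  shows "vle (vSup (g ` R)) u"
proof (rule vSup_least, clarify)
  fix r assume r: "r \<in> R"
  show "vle (g r) u"
  proof (cases "f r = g r")
    case True
    then show ?thesis
      using r assms(2) vSup_upper vle_trans by (metis imageI)
  next
    case False
    then have "vle (g r) (T a)"
      using r assms(1) sqle_eq_or_ord_ge ord_ge_iff by blast
    then show ?thesis
      using assms(3) vle_trans by blast
  qed
qed

lemma vSup_sqle_not_ord_ge:
  assumes sq: "\<forall>r\<in>R. sqle a (f r) (g r)" and below: "\<not> ord_ge (vSup (f ` R)) a"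
  shows "vSup (g ` R) = vSup (f ` R)"
proof (cases "vSup (f ` R)")
  case (F c)
  with below have "c < a"
    by auto
  have "\<forall>r\<in>R. \<not> ord_ge (f r) a"
  proof
    fix r assume "r \<in> R"
    then have "vle (f r) (F c)"
      using F vSup_upper by (metis imageI)
    then show "\<not> ord_ge (f r) a"
      using \<open>c < a\<close> by (rule not_ord_ge_if_vle_F)
  qed
  then have "\<forall>r\<in>R. g r = f r"
    using sq sqle_not_ord_ge_left by blast
  then have "g ` R = f ` R"
    by (intro image_cong) auto
  then show ?thesis
    by simp
next
  case Zero
  with below show ?thesis
    by simp
next
  case (T c)
  with below have "c < a"
    by auto
  obtain r where r: "r \<in> R" "f r = T c"
    using vSup_T_mem[OF T] by auto
  moreover have "\<not> ord_ge (T c) a"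
    using \<open>c < a\<close> by simp
  ultimately have "g r = T c"
    using sq sqle_not_ord_ge_left by metis
  then have "vle (T c) (vSup (g ` R))"
    using r(1) by (metis imageI vSup_upper)
  moreover have "vle (vSup (g ` R)) (T c)"
    using T \<open>c < a\<close> by (intro vSup_le_if_sqle[OF sq]) (simp_all add: vle_refl)
  ultimately show ?thesis
    unfolding T by (rule vle_antisym[rotated])
qed

lemma vSup_sqle_ord_ge:
  assumes sq: "\<forall>r\<in>R. sqle a (f r) (g r)" and region: "ord_ge (vSup (f ` R)) a"
  shows "sqle a (vSup (f ` R)) (vSup (g ` R))"
proof (cases "\<exists>r\<in>R. ord_ge (f r) a")
  case False
  then have "\<forall>r\<in>R. g r = f r"
    using sq sqle_not_ord_ge_left by blast
  then have "g ` R = f ` R"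
    by (intro image_cong) auto
  then show ?thesis
    by (simp add: sqle_refl)
next
  case True
  define s t where "s = vSup (f ` R)" and "t = vSup (g ` R)"
  have g_le_t: "vle (g r) t" if "r \<in> R" for r
    unfolding t_def using that by (auto intro: vSup_upper)
  obtain r0 where "r0 \<in> R" "ord_ge (g r0) a"
    using True sq sqle_ord_ge_left by blast
  then have "vle (F a) t"
    using g_le_t ord_ge_iff vle_trans by blast
  moreover have t_le: "vle t (T a)"
    unfolding t_def using sq by (rule vSup_le_if_sqle) (use region in \<open>simp_all add: ord_ge_iff vle_refl\<close>)
  ultimately have t_region: "ord_ge t a"
    by (simp add: ord_ge_iff)
  have "t = T a" if s_T: "s = T a"
  proof -
    obtain r where "r \<in> R" "f r = T a"
      using vSup_T_mem[of "f ` R" a] s_T unfolding s_def by auto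
    then have "vle (T a) t"
      using sq sqle_T_left g_le_t by metis
    with t_le show ?thesis
      by (rule vle_antisym)
  qed
  moreover have "s = F a" if t_F: "t = F a"
  proof -
    have "vle (f r) (F a)" if "r \<in> R" for r
    proof (cases "f r = g r")
      case True
      then show ?thesis
        using that t_F g_le_t by metis
    next
      case False
      then have "ord_ge (g r) a"
        using that sq sqle_eq_or_ord_ge by blast
      moreover have "vle (g r) (F a)"
        using that t_F g_le_t by metis
      ultimately have "g r = F a"
        using ord_ge_iff vle_antisym by blast
      then show ?thesis
        using that sq sqle_F_right vle_refl by metis
    qed
    then have "vle s (F a)"
      unfolding s_def by (auto intro: vSup_least)
    then show ?thesis
      using region ord_ge_iff vle_antisym unfolding s_def by blast
  qed
  ultimately show ?thesis
    using region t_region sqle_ord_ge_iff unfolding s_def t_def by blast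
qed

lemma sqle_vSup:
  assumes "\<forall>r\<in>R. sqle a (f r) (g r)"
  shows "sqle a (vSup (f ` R)) (vSup (g ` R))"
  using assms vSup_sqle_not_ord_ge vSup_sqle_ord_ge sqle_refl by metis

subsection \<open>Monotonicity of the immediate consequence operator\<close>

fun lit_atom :: "'z lit \<Rightarrow> 'z" where
  "lit_atom (Pos q) = q"
| "lit_atom (Neg q) = q"

fun body_atoms :: "'z body \<Rightarrow> 'z set" where
  "body_atoms (Lits ls) = lit_atom ` set ls"
| "body_atoms BTrue = {}"
| "body_atoms BFalse = {}"

lemma finite_body_atoms: "finite (body_atoms b)"
  by (cases b) auto

lemma sqle_eval_lit:
  assumes "\<And>b::'o::wellorder. b < osuc b" and "sqle (a::'o) (I (lit_atom l)) (J (lit_atom l))"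
  shows "sqle a (eval_lit I l) (eval_lit J l)"
  using assms by (cases l) (auto intro: sqle_vneg)

lemma sqle_eval_body:
  assumes "\<And>b::'o::wellorder. b < osuc b" and "\<forall>z\<in>body_atoms b. sqle (a::'o) (I z) (J z)"
  shows "sqle a (eval_body I b) (eval_body J b)"
proof (cases b)
  case (Lits ls)
  have "sqle a (foldr (\<lambda>l acc. vmin (eval_lit I l) acc) ls (T ozero))
               (foldr (\<lambda>l acc. vmin (eval_lit J l) acc) ls (T ozero))"
    if "\<forall>z\<in>lit_atom ` set ls. sqle a (I z) (J z)"
    using that
  proof (induction ls)
    case Nil
    then show ?case
      by (simp add: sqle_refl)
  next
    case (Cons l ls)
    then have "sqle a (eval_lit I l) (eval_lit J l)"
      using sqle_eval_lit[OF assms(1)] by auto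
    with Cons show ?case
      by (auto intro: sqle_vmin)
  qed
  with assms(2) Lits show ?thesis
    by simp
qed (auto simp: sqle_refl)

lemma TP_eq_vSup_image: "TP P I p = vSup ((\<lambda>b. eval_body I b) ` {b. (p, b) \<in> P})"
  unfolding TP_def by (rule arg_cong[where f = vSup]) auto

lemma sqleI_TP:
  assumes "\<And>b::'o::wellorder. b < osuc b" and "sqleI (a::'o) I J"
  shows "sqleI a (TP P I) (TP P J)"
  unfolding sqleI_def TP_eq_vSup_image
  using assms by (auto simp: sqleI_def intro!: sqle_vSup sqle_eval_body)

subsection \<open>Chains and the operation \<open>\<Squnion>\<^sub>\<alpha>\<close>\<close>

lemma sqle_chain_le:
  assumes "\<forall>n. sqle a (c n) (c (Suc n))" and "n \<le> m"
  shows "sqle a (c n) (c m)"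
  using assms(2) by (induction m rule: dec_induct) (auto intro: sqle_trans sqle_refl assms(1)[rule_format])

lemma vlub_ord_ge: "a < osuc a \<Longrightarrow> ord_ge x a \<Longrightarrow> ord_ge (vlub a x X) a"
  by (simp add: vlub_def less_imp_le)

lemma sqle_vlub_chain:
  assumes "a < osuc a" and chain: "\<forall>n. sqle a (c n) (c (Suc n))"
  shows "sqle a (c n) (vlub a (c 0) (range c))"
proof (cases "ord_ge (c 0) a")
  case False
  then have "c n = c 0"
    using sqle_chain_le[OF chain, of 0 n] sqle_not_ord_ge_left by auto
  with False show ?thesis
    by (simp add: vlub_def sqle_refl)
next
  case True
  then have "ord_ge (c n) a"
    using sqle_chain_le[OF chain, of 0 n] sqle_ord_ge_left by auto
  moreover have "ord_ge (vlub a (c 0) (range c)) a"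
    using True assms(1) by (rule vlub_ord_ge[rotated])
  moreover have "vlub a (c 0) (range c) = T a" if "c n = T a"
    using that True rangeI[of c n] by (simp add: vlub_def)
  moreover have "c n = F a" if "vlub a (c 0) (range c) = F a"
    using that True assms(1) by (auto simp: vlub_def split: if_splits)
  ultimately show ?thesis
    by (simp add: sqle_ord_ge_iff)
qed

lemma eventually_vlub_sqle_chain:
  assumes "a < osuc a" and chain: "\<forall>n. sqle a (c n) (c (Suc n))"
  shows "\<forall>\<^sub>F m in sequentially. sqle a (vlub a (c 0) (range c)) (c m)"
proof (cases "ord_ge (c 0) a")
  case False
  then have "vlub a (c 0) (range c) = c 0"
    by (simp add: vlub_def)
  then show ?thesis
    unfolding eventually_sequentially by (metis sqle_chain_le[OF chain] zero_le)
next
  case region: True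
  have c_region: "ord_ge (c m) a" for m
    using sqle_chain_le[OF chain, of 0 m] sqle_ord_ge_left region by auto
  have lub_region: "ord_ge (vlub a (c 0) (range c)) a"
    using region assms(1) by (rule vlub_ord_ge[rotated])
  consider (T) N where "c N = T a" | (F) "\<forall>n. c n = F a"
    | (neither) N where "T a \<notin> range c" "c N \<noteq> F a"
    by (metis rangeE)
  then show ?thesis
  proof cases
    case T
    then have "vlub a (c 0) (range c) = T a"
      using region rangeI[of c N] by (simp add: vlub_def)
    moreover have "c m = T a" if "N \<le> m" for m
      using sqle_T_left sqle_chain_le[OF chain that] unfolding T by blast
    ultimately show ?thesis
      unfolding eventually_sequentially by (intro exI[of _ N]) (simp add: sqle_refl)
  next
    case F
    then show ?thesis
      by (simp add: vlub_def sqle_refl image_subset_iff)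
  next
    case neither
    have "vlub a (c 0) (range c) \<noteq> T a"
      using neither(1) region assms(1) by (simp add: vlub_def)
    moreover have "c m \<noteq> F a" if "N \<le> m" for m
      by (metis neither(2) sqle_F_right sqle_chain_le[OF chain that])
    ultimately show ?thesis
      unfolding eventually_sequentially
      by (intro exI[of _ N] allI impI) (simp add: sqle_ord_ge_iff[OF lub_region c_region])
  qed
qed

lemma sqeq_vlub_if_upper_bound:
  assumes "a < osuc a" and chain: "\<forall>n. sqle a (t n) (t (Suc n))"
    and upper: "\<forall>n. sqle a (t n) u"
    and reach_T: "u = T a \<Longrightarrow> \<exists>n. t n = T a"
    and stay_F: "(\<forall>n. t n = F a) \<Longrightarrow> u = F a"
  shows "sqeq a u (vlub a (t 0) (range t))"
proof (cases "ord_ge (t 0) a")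
  case False
  then have "u = t 0"
    using upper sqle_not_ord_ge_left by blast
  with False show ?thesis
    by (simp add: vlub_def sqeq_def sqle_refl)
next
  case region: True
  define l where "l = vlub a (t 0) (range t)"
  have u_region: "ord_ge u a"
    using upper region sqle_ord_ge_left by blast
  have l_region: "ord_ge l a"
    unfolding l_def using region assms(1) by (rule vlub_ord_ge[rotated])
  have "u = T a \<longleftrightarrow> l = T a"
  proof
    assume "u = T a"
    then obtain n where "t n = T a"
      using reach_T by blast
    then show "l = T a"
      unfolding l_def using region rangeI[of t n] by (simp add: vlub_def)
  next
    assume "l = T a"
    then obtain n where "t n = T a"
      unfolding l_def using region assms(1) by (auto simp: vlub_def split: if_splits)
    then show "u = T a"
      using upper sqle_T_left by metis
  qed
  moreover have "u = F a \<longleftrightarrow> l = F a"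
  proof
    assume "u = F a"
    then have "range t \<subseteq> {F a}"
      using upper sqle_F_right by blast
    then show "l = F a"
      unfolding l_def using region by (auto simp: vlub_def)
  next
    assume "l = F a"
    then have "\<forall>n. t n = F a"
      unfolding l_def using region assms(1) by (auto simp: vlub_def split: if_splits)
    then show "u = F a"
      by (rule stay_F)
  qed
  ultimately show ?thesis
    unfolding sqeq_def l_def[symmetric] using sqle_ord_ge_iff[OF u_region l_region]
      sqle_ord_ge_iff[OF l_region u_region] by blast
qed

lemma sqeq_vSup_vlub:
  assumes "a < osuc a"
    and chain: "\<forall>n. \<forall>r\<in>R. sqle a (e n r) (e (Suc n) r)"
    and upper: "\<forall>n. \<forall>r\<in>R. sqle a (e n r) (l r)"
    and reach: "\<forall>r\<in>R. \<exists>N. sqle a (l r) (e N r)"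
  shows "sqeq a (vSup (l ` R)) (vlub a (vSup (e 0 ` R)) (range (\<lambda>n. vSup (e n ` R))))"
proof (rule sqeq_vlub_if_upper_bound[where t = "\<lambda>n. vSup (e n ` R)", OF assms(1)])
  show "\<forall>n. sqle a (vSup (e n ` R)) (vSup (e (Suc n) ` R))"
    using chain by (blast intro: sqle_vSup)
  show upper_sup: "\<forall>n. sqle a (vSup (e n ` R)) (vSup (l ` R))"
    using upper by (blast intro: sqle_vSup)
  show "\<exists>n. vSup (e n ` R) = T a" if l_T: "vSup (l ` R) = T a"
  proof -
    obtain r where r: "r \<in> R" "l r = T a"
      using vSup_T_mem[OF l_T] by auto
    then obtain N where "e N r = T a"
      using reach sqle_T_left by metis
    then have "vle (T a) (vSup (e N ` R))"
      using r(1) by (metis imageI vSup_upper)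
    moreover have "vle (vSup (e N ` R)) (T a)"
      using upper_sup l_T sqle_eq_or_ord_ge ord_ge_iff vle_refl by metis
    ultimately show ?thesis
      using vle_antisym by blast
  qed
  show "vSup (l ` R) = F a" if all_F: "\<forall>n. vSup (e n ` R) = F a"
  proof -
    have e_le: "vle (e n r) (F a)" if "r \<in> R" for n r
      using that all_F vSup_upper by (metis imageI)
    have "vle (l r) (F a)" if r: "r \<in> R" for r
    proof (cases "ord_ge (l r) a")
      case True
      obtain N where N: "sqle a (l r) (e N r)"
        using reach r by blast
      then have "ord_ge (e N r) a"
        using True sqle_ord_ge_left by blast
      then have "e N r = F a"
        using e_le[OF r] ord_ge_iff vle_antisym by blast
      then show ?thesis
        using N sqle_F_right vle_refl by metis
    next
      case False
      then have "e 0 r = l r"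
        by (rule sqle_not_ord_ge_right[OF upper[rule_format, OF r]])
      then show ?thesis
        using e_le[OF r, of 0] by simp
    qed
    then have "vle (vSup (l ` R)) (F a)"
      by (auto intro: vSup_least)
    moreover have "ord_ge (vSup (l ` R)) a"
      using upper_sup all_F sqle_ord_ge_left[of a "F a"] by simp
    ultimately show ?thesis
      using ord_ge_iff vle_antisym by blast
  qed
qed

subsection \<open>Continuity\<close>

lemma vlubI_range_apply: "vlubI a (Is 0) (range Is) z = vlub a (Is 0 z) (range (\<lambda>n. Is n z))"
  unfolding vlubI_def by (simp add: image_image)

lemma sqeqI_iff: "sqeqI a I J \<longleftrightarrow> (\<forall>z. sqeq a (I z) (J z))"
  unfolding sqeqI_def sqleI_def sqeq_def by blast

lemma sqleI_vlubI_chain: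
  assumes "a < osuc a" and "\<forall>n. sqleI a (Is n) (Is (Suc n))"
  shows "sqleI a (Is n) (vlubI a (Is 0) (range Is))"
  unfolding sqleI_def vlubI_range_apply
proof
  fix z
  show "sqle a (Is n z) (vlub a (Is 0 z) (range (\<lambda>n. Is n z)))"
    using assms(2) by (intro sqle_vlub_chain[OF assms(1)]) (simp add: sqleI_def)
qed

lemma eventually_vlubI_sqle_eval_body:
  assumes "\<And>b::'o::wellorder. b < osuc b" and chain: "\<forall>n. sqleI (a::'o) (Is n) (Is (Suc n))"
  shows "\<forall>\<^sub>F m in sequentially.
    sqle a (eval_body (vlubI a (Is 0) (range Is)) b) (eval_body (Is m) b)"
proof -
  have "\<forall>\<^sub>F m in sequentially. sqle a (vlubI a (Is 0) (range Is) z) (Is m z)" for z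
    unfolding vlubI_range_apply
    using assms(1) chain by (intro eventually_vlub_sqle_chain) (auto simp: sqleI_def)
  then have "\<forall>\<^sub>F m in sequentially. \<forall>z\<in>body_atoms b. sqle a (vlubI a (Is 0) (range Is) z) (Is m z)"
    by (intro eventually_ball_finite finite_body_atoms) blast
  then show ?thesis
    by (rule eventually_mono) (rule sqle_eval_body[OF assms(1)])
qed

theorem mainTheorem19:
  fixes P :: "'z rule set" and a :: "'o::wellorder"
  assumes "\<not> countable (UNIV :: 'o set)"
    and "\<forall>b::'o. countable {c. c < b}"
    and "countable P"
  shows "alpha_continuous a (TP P :: ('z \<Rightarrow> 'o tv) \<Rightarrow> ('z \<Rightarrow> 'o tv))"
  unfolding alpha_continuous_def alpha_monotonic_def
proof (intro conjI allI impI)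
  have osuc: "\<And>b::'o. b < osuc b"
    using assms(1,2) by (rule less_osuc)
  show "sqleI a (TP P I) (TP P J)" if "sqleI a I J" for I J :: "'z \<Rightarrow> 'o tv"
    using osuc that by (rule sqleI_TP)
  fix Is :: "nat \<Rightarrow> 'z \<Rightarrow> 'o tv"
  assume chain: "\<forall>n. sqleI a (Is n) (Is (Suc n))"
  define L where "L = vlubI a (Is 0) (range Is)"
  have "sqeq a (TP P L p) (vlub a (TP P (Is 0) p) (range (\<lambda>n. TP P (Is n) p)))" for p
    unfolding TP_eq_vSup_image
  proof (rule sqeq_vSup_vlub[OF osuc])
    show "\<forall>n. \<forall>b\<in>{b. (p, b) \<in> P}. sqle a (eval_body (Is n) b) (eval_body (Is (Suc n)) b)"
      using chain by (auto simp: sqleI_def intro: sqle_eval_body[OF osuc])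
    show "\<forall>n. \<forall>b\<in>{b. (p, b) \<in> P}. sqle a (eval_body (Is n) b) (eval_body L b)"
      using sqleI_vlubI_chain[OF osuc chain] unfolding L_def
      by (auto simp: sqleI_def intro: sqle_eval_body[OF osuc])
    show "\<forall>b\<in>{b. (p, b) \<in> P}. \<exists>N. sqle a (eval_body L b) (eval_body (Is N) b)"
      using eventually_vlubI_sqle_eval_body[OF osuc chain] unfolding L_def
      by (metis eventually_sequentially order.refl)
  qed
  moreover have "vlubI a (TP P (Is 0)) (range (\<lambda>n. TP P (Is n))) p
      = vlub a (TP P (Is 0) p) (range (\<lambda>n. TP P (Is n) p))" for p
    by (rule vlubI_range_apply)
  ultimately show "sqeqI a (TP P (vlubI a (Is 0) (range Is))) (vlubI a (TP P (Is 0)) (range (\<lambda>n. TP P (Is n))))"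
    unfolding L_def[symmetric] sqeqI_iff by simp
qed

end
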